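(* Let $\{c_n\}_{n\in\mathbb Z}$ be complex numbers such that $c_n+c_{-n}\in M(\theta_0)$ for all $n\ge1$ for some $\theta_0\in[0,\pi/2)$, and $\{c_n\}_{n\ge0}\in NBVS$. Let $S_n(x)=\sum_{k=-n}^nc_ke^{ikx}$. If $S_n$ converges uniformly on $\mathbb R$ to a (continuous, $2\pi$-periodic) function $f$, i.e. $\lim_{n\to\infty}\|f-S_n\|=0$ with $\|g\|=\max_x|g(x)|$, then $\lim_{n\to\infty}nc_n=0$.
   Context: For $\theta_0\in[0,\pi/2)$ let $M(\theta_0)=\{z\in\mathbb C: |\arg z|\le\theta_0\}$ (with $0\in M(\theta_0)$). Write $\Delta c_n=c_n-c_{n+1}$. A complex sequence $\mathbf C=\{c_n\}$ belongs to $NBVS$ if there is $\theta_0\in[0,\pi/2)$ with $c_n\in M(\theta_0)$ for all $n\ge1$ and a constant $K(\mathbf C)>0$ such that $\sum_{n=m}^{2m}|\Delta c_n|\le K(\mathbf C)\big(|c_m|+|c_{2m}|\big)$ for all $m\ge1$. *)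

theory Defs
  imports "HOL-Analysis.Analysis"
begin

definition sector :: "real \<Rightarrow> complex set" where
  "sector \<theta>0 = {z. z = 0 \<or> \<bar>Arg z\<bar> \<le> \<theta>0}"

definition NBVS :: "(nat \<Rightarrow> complex) \<Rightarrow> bool" where
  "NBVS c \<longleftrightarrow>
     (\<exists>\<theta>0. 0 \<le> \<theta>0 \<and> \<theta>0 < pi/2 \<and> (\<forall>n\<ge>1. c n \<in> sector \<theta>0)) \<and>
     (\<exists>K>0. \<forall>m\<ge>1. (\<Sum>n=m..2*m. norm (c n - c (Suc n))) \<le> K * (norm (c m) + norm (c (2*m))))"

end

theory Submission
  imports Defs
begin

(* Write g_k(x) = c_k e^(ikx) + c_(-k) e^(-ikx). Uniform convergence makes the blocks
   S_(5m) - S_m = sum_(m<k<=5m) g_k tend to 0 uniformly. A point z of a sector of opening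
   theta < pi/2 satisfies Re z >= cos theta |z|, so nonnegative combinations of such points do
   not cancel. Since g_k(x) + g_k(-x) = 2 cos(kx) (c_k + c_(-k)) and cos(kx) >= 1/2 on the
   block for x = 1/(10m), the block sums of |c_k + c_(-k)| tend to 0; since
   g_k(x) = (c_k + c_(-k)) e^(-ikx) + 2i sin(kx) c_k and sin(kx) >= sin(1/5) on the block for
   x = 1/(5m), so do the block sums of |c_k|. Finally the NBVS condition bounds |c_N| by
   (K+1)(|c_m| + |c_(2m)|) for every m in (N/2, N]; averaging over these m gives
   N |c_N| <= 4 (K+1) sum_(h<k<=5h) |c_k| with h = N div 2. *)

lemma sector_cos_mult_norm_le_Re:
  assumes "\<theta> \<le> pi" and "z \<in> sector \<theta>"
  shows "cos \<theta> * norm z \<le> Re z"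
proof (cases "z = 0")
  case False
  then have "\<bar>Arg z\<bar> \<le> \<theta>"
    using assms(2) by (auto simp: sector_def)
  then have "cos \<theta> \<le> cos \<bar>Arg z\<bar>"
    using assms(1) by (intro cos_monotone_0_pi_le) auto
  also have "\<dots> = Re z / norm z"
    using False by (simp add: cos_Arg abs_if)
  finally show ?thesis
    using False by (simp add: field_simps)
qed simp

lemma sector_cos_mult_sum_norm_le_norm_sum:
  assumes "\<theta> \<le> pi"
    and "\<And>k. k \<in> A \<Longrightarrow> a k \<in> sector \<theta>" and "\<And>k. k \<in> A \<Longrightarrow> 0 \<le> w k"
  shows "cos \<theta> * (\<Sum>k\<in>A. w k * norm (a k)) \<le> norm (\<Sum>k\<in>A. of_real (w k) * a k)"
proof -
  have "cos \<theta> * (\<Sum>k\<in>A. w k * norm (a k)) = (\<Sum>k\<in>A. w k * (cos \<theta> * norm (a k)))"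
    by (simp add: sum_distrib_left algebra_simps)
  also have "\<dots> \<le> (\<Sum>k\<in>A. w k * Re (a k))"
    using assms by (intro sum_mono mult_left_mono sector_cos_mult_norm_le_Re) auto
  also have "\<dots> = Re (\<Sum>k\<in>A. of_real (w k) * a k)"
    by (simp add: Re_sum)
  also have "\<dots> \<le> norm (\<Sum>k\<in>A. of_real (w k) * a k)"
    by (rule complex_Re_le_cmod)
  finally show ?thesis .
qed

lemma norm_le_norm_add_sum_norm_diff:
  fixes d :: "nat \<Rightarrow> 'a::real_normed_vector"
  assumes "m \<le> N"
  shows "norm (d N) \<le> norm (d m) + (\<Sum>n=m..<N. norm (d n - d (Suc n)))"
proof -
  have "(\<Sum>n=m..<N. d n - d (Suc n)) = d m - d N"
    using assms by (induction N rule: dec_induct) (simp_all add: algebra_simps)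
  then have "norm (d N) \<le> norm (d m) + norm (\<Sum>n=m..<N. d n - d (Suc n))"
    using norm_triangle_ineq4[of "d m" "d m - d N"] by simp
  also have "\<dots> \<le> norm (d m) + (\<Sum>n=m..<N. norm (d n - d (Suc n)))"
    using norm_sum by simp
  finally show ?thesis .
qed

lemma norm_le_by_dyadic_variation:
  fixes d :: "nat \<Rightarrow> 'a::real_normed_vector"
  assumes K: "\<And>m. 1 \<le> m \<Longrightarrow> (\<Sum>n=m..2*m. norm (d n - d (Suc n))) \<le> K * (norm (d m) + norm (d (2*m)))"
    and "1 \<le> m" "m \<le> N" "N \<le> 2*m"
  shows "norm (d N) \<le> (K + 1) * (norm (d m) + norm (d (2*m)))"
proof -
  have "norm (d N) \<le> norm (d m) + (\<Sum>n=m..<N. norm (d n - d (Suc n)))"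
    using assms(3) by (rule norm_le_norm_add_sum_norm_diff)
  also have "\<dots> \<le> norm (d m) + (\<Sum>n=m..2*m. norm (d n - d (Suc n)))"
    using assms(4) by (intro add_left_mono sum_mono2) auto
  also have "\<dots> \<le> norm (d m) + K * (norm (d m) + norm (d (2*m)))"
    using K assms(2) by simp
  finally have "norm (d N) \<le> norm (d m) + K * (norm (d m) + norm (d (2*m)))" .
  moreover have "(K + 1) * (norm (d m) + norm (d (2*m))) = K * (norm (d m) + norm (d (2*m))) + norm (d m) + norm (d (2*m))"
    by (simp add: algebra_simps)
  ultimately show ?thesis
    using norm_ge_zero[of "d (2*m)"] by linarith
qed

lemma of_nat_mult_norm_le_block_sum:
  fixes d :: "nat \<Rightarrow> 'a::real_normed_vector"
  assumes K: "\<And>m. 1 \<le> m \<Longrightarrow> (\<Sum>n=m..2*m. norm (d n - d (Suc n))) \<le> K * (norm (d m) + norm (d (2*m)))"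
    and "0 \<le> K" and "2 \<le> N div 2"
  shows "real N * norm (d N) \<le> 4 * (K + 1) * (\<Sum>k\<in>{N div 2<..5 * (N div 2)}. norm (d k))"
proof -
  define h where "h = N div 2"
  define T where "T = (\<Sum>k\<in>{h<..5*h}. norm (d k))"
  have h: "2 \<le> h" "2 * h \<le> N" "N \<le> 2 * h + 1"
    using assms(3) unfolding h_def by auto
  have "(\<Sum>m\<in>{h<..N}. norm (d m)) \<le> T"
    unfolding T_def using h by (intro sum_mono2) auto
  moreover have "(\<Sum>m\<in>{h<..N}. norm (d (2*m))) = (\<Sum>k\<in>(\<lambda>m. 2 * m) ` {h<..N}. norm (d k))"
    by (subst sum.reindex) (auto simp: inj_on_def)
  moreover have "\<dots> \<le> T"
    unfolding T_def using h by (intro sum_mono2) auto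
  ultimately have sums: "(\<Sum>m\<in>{h<..N}. norm (d m) + norm (d (2*m))) \<le> 2 * T"
    by (simp add: sum.distrib)
  have "real N * norm (d N) \<le> 2 * real (card {h<..N}) * norm (d N)"
    using h by (intro mult_right_mono) auto
  also have "\<dots> = 2 * (\<Sum>m\<in>{h<..N}. norm (d N))"
    by simp
  also have "\<dots> \<le> 2 * (\<Sum>m\<in>{h<..N}. (K + 1) * (norm (d m) + norm (d (2*m))))"
    using h by (intro mult_left_mono sum_mono norm_le_by_dyadic_variation[OF K]) auto
  also have "\<dots> \<le> 2 * ((K + 1) * (2 * T))"
    using sums assms(2) by (simp add: sum_distrib_left[symmetric])
  finally show ?thesis
    unfolding T_def h_def by (simp add: algebra_simps)
qed

definition fourier_pair :: "(int \<Rightarrow> complex) \<Rightarrow> nat \<Rightarrow> real \<Rightarrow> complex" where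
  "fourier_pair c k x =
     c (int k) * exp (\<i> * of_int (int k) * of_real x) + c (- int k) * exp (\<i> * of_int (- int k) * of_real x)"

lemma fourier_pair_eq_cis:
  "fourier_pair c k x = c (int k) * cis (real k * x) + c (- int k) * cis (- (real k * x))"
  unfolding fourier_pair_def cis_conv_exp by (simp add: mult_ac)

lemma fourier_pair_add_reflect:
  "fourier_pair c k x + fourier_pair c k (- x) = 2 * of_real (cos (real k * x)) * (c (int k) + c (- int k))"
proof -
  let ?t = "real k * x"
  have "fourier_pair c k x + fourier_pair c k (- x) = (c (int k) + c (- int k)) * (cis ?t + cis (- ?t))"
    unfolding fourier_pair_eq_cis by (simp add: algebra_simps)
  also have "cis ?t + cis (- ?t) = 2 * of_real (cos ?t)"
    by (simp add: complex_eq_iff)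
  finally show ?thesis
    by (simp add: mult_ac)
qed

lemma fourier_pair_eq:
  "fourier_pair c k x = (c (int k) + c (- int k)) * cis (- (real k * x))
     + 2 * \<i> * of_real (sin (real k * x)) * c (int k)"
proof -
  have "cis (real k * x) = cis (- (real k * x)) + 2 * \<i> * of_real (sin (real k * x))"
    by (simp add: complex_eq_iff)
  then show ?thesis
    unfolding fourier_pair_eq_cis by (simp add: algebra_simps)
qed

lemma sum_int_symmetric_atLeastAtMost:
  fixes F :: "int \<Rightarrow> 'a::comm_monoid_add"
  shows "(\<Sum>k\<in>{-int n..int n}. F k) = F 0 + (\<Sum>k=1..n. F (int k) + F (- int k))"
proof (induction n)
  case (Suc n)
  have "{-int (Suc n)..int (Suc n)} = insert (int (Suc n)) (insert (- int (Suc n)) {-int n..int n})"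
    by auto
  then show ?case
    using Suc by (simp add: algebra_simps)
qed simp

lemma fourier_partial_sum_diff:
  assumes "n \<le> N"
  shows "(\<Sum>k\<in>{-int N..int N}. c k * exp (\<i> * of_int k * of_real x))
           - (\<Sum>k\<in>{-int n..int n}. c k * exp (\<i> * of_int k * of_real x))
         = (\<Sum>k\<in>{n<..N}. fourier_pair c k x)"
proof -
  have "(\<Sum>k=1..N. fourier_pair c k x) = (\<Sum>k=1..n. fourier_pair c k x) + (\<Sum>k\<in>{n<..N}. fourier_pair c k x)"
    using assms by (subst sum.union_disjoint[symmetric]) (auto intro!: sum.cong)
  then show ?thesis
    unfolding sum_int_symmetric_atLeastAtMost fourier_pair_def by simp
qed

lemma sector_sum_norm_le_fourier_even_part:
  assumes "0 \<le> \<theta>" "\<theta> \<le> pi/2"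
    and "\<And>k. k \<in> A \<Longrightarrow> c (int k) + c (- int k) \<in> sector \<theta>"
    and "\<And>k. k \<in> A \<Longrightarrow> 1/2 \<le> cos (real k * x)"
  shows "cos \<theta> * (\<Sum>k\<in>A. norm (c (int k) + c (- int k)))
           \<le> norm (\<Sum>k\<in>A. fourier_pair c k x) + norm (\<Sum>k\<in>A. fourier_pair c k (- x))"
proof -
  define a where "a k = c (int k) + c (- int k)" for k
  have "\<theta> \<le> pi"
    using assms(2) pi_gt_zero by linarith
  have cos_nonneg: "0 \<le> cos \<theta>"
    using assms(1,2) by (intro cos_ge_zero) auto
  have "norm (a k) \<le> 2 * (cos (real k * x) * norm (a k))" if "k \<in> A" for k
    using mult_right_mono[OF assms(4)[OF that] norm_ge_zero[of "a k"]] by simp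
  then have "cos \<theta> * (\<Sum>k\<in>A. norm (a k)) \<le> cos \<theta> * (2 * (\<Sum>k\<in>A. cos (real k * x) * norm (a k)))"
    using cos_nonneg by (intro mult_left_mono) (auto simp: sum_distrib_left intro: sum_mono)
  also have "\<dots> = 2 * (cos \<theta> * (\<Sum>k\<in>A. cos (real k * x) * norm (a k)))"
    by simp
  also have "\<dots> \<le> 2 * norm (\<Sum>k\<in>A. of_real (cos (real k * x)) * a k)"
    using assms(3,4) \<open>\<theta> \<le> pi\<close> unfolding a_def
    by (intro mult_left_mono sector_cos_mult_sum_norm_le_norm_sum) (auto intro: order_trans[of 0 "1/2"])
  also have "\<dots> = norm (\<Sum>k\<in>A. fourier_pair c k x + fourier_pair c k (- x))"
    by (simp add: fourier_pair_add_reflect a_def sum_distrib_left[symmetric] norm_mult mult.assoc)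
  also have "\<dots> \<le> norm (\<Sum>k\<in>A. fourier_pair c k x) + norm (\<Sum>k\<in>A. fourier_pair c k (- x))"
    by (simp add: sum.distrib norm_triangle_ineq)
  finally show ?thesis
    by (simp add: a_def)
qed

lemma sector_sum_norm_le_fourier_odd_part:
  assumes "0 \<le> \<theta>" "\<theta> \<le> pi/2"
    and "\<And>k. k \<in> A \<Longrightarrow> c (int k) \<in> sector \<theta>"
    and "0 \<le> s" "\<And>k. k \<in> A \<Longrightarrow> s \<le> sin (real k * x)"
  shows "2 * s * cos \<theta> * (\<Sum>k\<in>A. norm (c (int k)))
           \<le> norm (\<Sum>k\<in>A. fourier_pair c k x) + (\<Sum>k\<in>A. norm (c (int k) + c (- int k)))"
proof -
  define X where "X = (\<Sum>k\<in>A. of_real (sin (real k * x)) * c (int k))"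
  define Y where "Y = (\<Sum>k\<in>A. (c (int k) + c (- int k)) * cis (- (real k * x)))"
  have "0 \<le> cos \<theta>"
    using assms(1,2) by (intro cos_ge_zero) auto
  moreover have "s * (\<Sum>k\<in>A. norm (c (int k))) \<le> (\<Sum>k\<in>A. sin (real k * x) * norm (c (int k)))"
    unfolding sum_distrib_left using assms(5) by (intro sum_mono mult_right_mono) auto
  ultimately have "cos \<theta> * (s * (\<Sum>k\<in>A. norm (c (int k)))) \<le> cos \<theta> * (\<Sum>k\<in>A. sin (real k * x) * norm (c (int k)))"
    by (rule mult_left_mono[rotated])
  also have "\<dots> \<le> norm X"
    unfolding X_def using assms by (intro sector_cos_mult_sum_norm_le_norm_sum) (auto intro: order_trans)
  finally have "2 * s * cos \<theta> * (\<Sum>k\<in>A. norm (c (int k))) \<le> norm (2 * \<i> * X)"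
    by (simp add: norm_mult mult_ac)
  also have "2 * \<i> * X = (\<Sum>k\<in>A. fourier_pair c k x) - Y"
    unfolding X_def Y_def fourier_pair_eq by (simp add: sum.distrib sum_distrib_left mult.assoc)
  also have "norm (\<dots>) \<le> norm (\<Sum>k\<in>A. fourier_pair c k x) + norm Y"
    by (rule norm_triangle_ineq4)
  also have "norm Y \<le> (\<Sum>k\<in>A. norm (c (int k) + c (- int k)))"
    unfolding Y_def by (rule order_trans[OF norm_sum]) (simp add: norm_mult)
  finally show ?thesis
    by simp
qed

lemma fourier_block_sum_norm_le:
  assumes "0 \<le> \<theta>0" "\<theta>0 \<le> pi/2" "0 \<le> \<theta>1" "\<theta>1 \<le> pi/2"
    and "\<And>k. 1 \<le> k \<Longrightarrow> c (int k) + c (- int k) \<in> sector \<theta>0"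
    and "\<And>k. 1 \<le> k \<Longrightarrow> c (int k) \<in> sector \<theta>1"
    and block: "\<And>x. norm (\<Sum>k\<in>{m<..5*m}. fourier_pair c k x) \<le> E"
  shows "2 * sin (1/5) * cos \<theta>1 * cos \<theta>0 * (\<Sum>k\<in>{m<..5*m}. norm (c (int k))) \<le> (cos \<theta>0 + 2) * E"
proof -
  let ?B = "{m<..5*m}"
  have scaled: "real m < real k" "real k \<le> 5 * real m" if "k \<in> ?B" for k
    using that by auto
  have "1/2 \<le> cos (real k * (1 / (10 * real m)))" if "k \<in> ?B" for k
  proof -
    have "0 \<le> real k * (1 / (10 * real m))" "real k * (1 / (10 * real m)) \<le> 1/2"
      using scaled[OF that] by (auto simp: field_simps)
    then have "cos (pi/3) \<le> cos (real k * (1 / (10 * real m)))"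
      using pi_gt3 by (intro cos_monotone_0_pi_le) auto
    then show ?thesis
      by (simp add: cos_60)
  qed
  then have "cos \<theta>0 * (\<Sum>k\<in>?B. norm (c (int k) + c (- int k)))
      \<le> norm (\<Sum>k\<in>?B. fourier_pair c k (1 / (10 * real m))) + norm (\<Sum>k\<in>?B. fourier_pair c k (- (1 / (10 * real m))))"
    using assms(5) by (intro sector_sum_norm_le_fourier_even_part[OF assms(1,2)]) auto
  also have "\<dots> \<le> 2 * E"
    using block[of "1 / (10 * real m)"] block[of "- (1 / (10 * real m))"] by simp
  finally have even: "cos \<theta>0 * (\<Sum>k\<in>?B. norm (c (int k) + c (- int k))) \<le> 2 * E" .
  have "sin (1/5) \<le> sin (real k * (1 / (5 * real m)))" if "k \<in> ?B" for k
  proof -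
    have "1/5 \<le> real k * (1 / (5 * real m))" "real k * (1 / (5 * real m)) \<le> 1"
      using scaled[OF that] by (auto simp: field_simps)
    then show ?thesis
      using pi_gt3 by (intro sin_monotone_2pi_le) auto
  qed
  moreover have "0 \<le> sin (1/5::real)"
    using pi_gt3 by (intro sin_ge_zero) auto
  ultimately have "2 * sin (1/5) * cos \<theta>1 * (\<Sum>k\<in>?B. norm (c (int k)))
      \<le> norm (\<Sum>k\<in>?B. fourier_pair c k (1 / (5 * real m))) + (\<Sum>k\<in>?B. norm (c (int k) + c (- int k)))"
    using assms(6) by (intro sector_sum_norm_le_fourier_odd_part[OF assms(3,4)]) auto
  also have "\<dots> \<le> E + (\<Sum>k\<in>?B. norm (c (int k) + c (- int k)))"
    using block by simp
  finally have odd: "2 * sin (1/5) * cos \<theta>1 * (\<Sum>k\<in>?B. norm (c (int k)))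
      \<le> E + (\<Sum>k\<in>?B. norm (c (int k) + c (- int k)))" .
  have "0 \<le> cos \<theta>0"
    using assms(1,2) by (intro cos_ge_zero) auto
  with odd have "cos \<theta>0 * (2 * sin (1/5) * cos \<theta>1 * (\<Sum>k\<in>?B. norm (c (int k))))
      \<le> cos \<theta>0 * (E + (\<Sum>k\<in>?B. norm (c (int k) + c (- int k))))"
    by (rule mult_left_mono)
  then show ?thesis
    using even by (simp add: algebra_simps)
qed

lemma fourier_block_sum_norm_tendsto_0:
  assumes "0 \<le> \<theta>0" "\<theta>0 < pi/2" "0 \<le> \<theta>1" "\<theta>1 < pi/2"
    and "\<And>k. 1 \<le> k \<Longrightarrow> c (int k) + c (- int k) \<in> sector \<theta>0"
    and "\<And>k. 1 \<le> k \<Longrightarrow> c (int k) \<in> sector \<theta>1"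
    and "uniform_limit UNIV
           (\<lambda>n x. \<Sum>k\<in>{-int n..int n}. c k * exp (\<i> * of_int k * of_real x)) f sequentially"
  shows "(\<lambda>m. \<Sum>k\<in>{m<..5*m}. norm (c (int k))) \<longlonglongrightarrow> 0"
proof (rule LIMSEQ_I)
  fix r :: real
  assume "0 < r"
  define S where "S n x = (\<Sum>k\<in>{-int n..int n}. c k * exp (\<i> * of_int k * of_real x))" for n x
  define C where "C = 2 * sin (1/5) * cos \<theta>1 * cos \<theta>0"
  define E where "E = C * r / (2 * (cos \<theta>0 + 2))"
  have "0 < sin (1/5::real)"
    using pi_gt3 by (intro sin_gt_zero) auto
  moreover have "0 < cos \<theta>0" "0 < cos \<theta>1"
    using assms(1-4) by (auto intro!: cos_gt_zero_pi)
  ultimately have "0 < C" "0 < E"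
    using \<open>0 < r\<close> unfolding C_def E_def by (auto intro!: divide_pos_pos add_pos_pos)
  have "uniformly_Cauchy_on UNIV S"
    using assms(7) unfolding S_def by (intro uniformly_convergent_Cauchy) (auto simp: uniformly_convergent_on_def)
  then obtain M where M: "\<And>x m n. M \<le> m \<Longrightarrow> M \<le> n \<Longrightarrow> dist (S m x) (S n x) < E"
    using \<open>0 < E\<close> unfolding uniformly_Cauchy_on_def by blast
  have "norm (\<Sum>k\<in>{m<..5*m}. norm (c (int k))) < r" if "M \<le> m" for m
  proof -
    have "norm (\<Sum>k\<in>{m<..5*m}. fourier_pair c k x) \<le> E" for x
      using M[of "5*m" m x] that fourier_partial_sum_diff[of m "5*m" c x]
      unfolding S_def by (simp add: dist_norm)
    then have "C * (\<Sum>k\<in>{m<..5*m}. norm (c (int k))) \<le> (cos \<theta>0 + 2) * E"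
      unfolding C_def using assms(1-6) by (intro fourier_block_sum_norm_le) auto
    also have "\<dots> = C * (r / 2)"
      using \<open>0 < cos \<theta>0\<close> unfolding E_def by (simp add: field_simps)
    finally show ?thesis
      using \<open>0 < C\<close> \<open>0 < r\<close> by (simp add: sum_nonneg)
  qed
  then show "\<exists>M. \<forall>m\<ge>M. norm ((\<Sum>k\<in>{m<..5*m}. norm (c (int k))) - 0) < r"
    by auto
qed

theorem lemma2:
  fixes c :: "int \<Rightarrow> complex" and f :: "real \<Rightarrow> complex" and \<theta>0 :: real
  assumes "0 \<le> \<theta>0" and "\<theta>0 < pi/2"
    and "\<And>n::int. n \<ge> 1 \<Longrightarrow> c n + c (-n) \<in> sector \<theta>0"
    and "NBVS (\<lambda>n. c (int n))"
    and "uniform_limit UNIV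
           (\<lambda>n x. \<Sum>k\<in>{-int n..int n}. c k * exp (\<i> * of_int k * of_real x)) f sequentially"
  shows "(\<lambda>n. of_nat n * c (int n)) \<longlonglongrightarrow> 0"
proof -
  obtain \<theta>1 where \<theta>1: "0 \<le> \<theta>1" "\<theta>1 < pi/2" "\<And>k. 1 \<le> k \<Longrightarrow> c (int k) \<in> sector \<theta>1"
    using assms(4) unfolding NBVS_def by auto
  obtain K where K: "0 < K"
    "\<And>m. 1 \<le> m \<Longrightarrow> (\<Sum>n=m..2*m. norm (c (int n) - c (int (Suc n)))) \<le> K * (norm (c (int m)) + norm (c (int (2*m))))"
    using assms(4) unfolding NBVS_def by auto
  define T where "T m = (\<Sum>k\<in>{m<..5*m}. norm (c (int k)))" for m
  have "T \<longlonglongrightarrow> 0"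
    unfolding T_def
    by (rule fourier_block_sum_norm_tendsto_0[OF assms(1,2) \<theta>1(1,2) _ \<theta>1(3) assms(5)])
      (simp add: assms(3))
  then have "(\<lambda>N. 4 * (K + 1) * T (N div 2)) \<longlonglongrightarrow> 0"
    by (intro tendsto_mult_right_zero filterlim_compose[OF _ filterlim_at_top_div_const_nat]) simp_all
  moreover have "\<forall>\<^sub>F N in sequentially. norm (of_nat N * c (int N)) \<le> 4 * (K + 1) * T (N div 2)"
    using eventually_ge_at_top[of 4]
  proof eventually_elim
    case (elim N)
    then show ?case
      using of_nat_mult_norm_le_block_sum[where d = "\<lambda>n. c (int n)", OF K(2)] K(1)
      unfolding T_def by (simp add: norm_mult)
  qed
  ultimately show ?thesis
    by (rule Lim_null_comparison[rotated])
qed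

end
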